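(* Fix positive integers $K$, $N$, $L$. In the model described in the context, $M\hat{\mathbf{R}}^{-1}\rightarrow \mathbf{I}_{KL\times KL}$ almost surely as $M\rightarrow\infty$ and $P_e\rightarrow 0$.
   Context: Synchronous DS-CDMA model with $K$ users, spreading gain $N$, $L$ paths per user and $M$ symbol periods. For each user $k\in\{1,\dots,K\}$, path $l\in\{1,\dots,L\}$ and symbol period $t\in\{1,\dots,M\}$, the spreading code $\mathbf{s}_{kl}(t)\in\mathbb{R}^N$ has entries in $\{\pm 1/\sqrt{N}\}$ (so $\|\mathbf{s}_{kl}(t)\|=1$); these entries are i.i.d. uniform and the codes are mutually independent across $(k,l,t)$. The transmitted symbols $b_k(t)\in\{\pm1\}$ are i.i.d. uniform. The fed-back decisions satisfy $\hat b_k(t)=b_k(t)$ with probability $1-P_e$ and $\hat b_k(t)=-b_k(t)$ with probability $P_e$, independently across $(k,t)$. Let $\mathbf{S}(m)=(\mathbf{s}_{11}(m),\mathbf{s}_{12}(m),\dots,\mathbf{s}_{KL}(m))\in\mathbb{R}^{N\times KL}$, $\hat{\mathbf{B}}(m)=\mathrm{diag}(\hat b_1(m)\mathbf{I}_{L},\dots,\hat b_K(m)\mathbf{I}_{L})\in\mathbb{R}^{KL\times KL}$, $\hat{\mathbf{S}}\in\mathbb{R}^{NM\times KL}$ the matrix obtained by stacking $\mathbf{S}(1)\hat{\mathbf{B}}(1),\dots,\mathbf{S}(M)\hat{\mathbf{B}}(M)$ vertically, and $\hat{\mathbf{R}}=\hat{\mathbf{S}}^T\hat{\mathbf{S}}$.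 *)

theory Defs
  imports "HOL-Probability.Probability"
begin

text \<open>Index set of the random variables of the DS-CDMA model.
  Users are indexed by a finite type 'k (K = CARD('k)), paths by 'l (L = CARD('l)),
  chips by 'n (N = CARD('n)); symbol periods by nat (only periods t \<ge> 1 are used).
  Code t: chip i of code s_{kl}(t);  Sym k t: b_k(t);  Err k t: the sign e with
  hat b_k(t) = e * b_k(t).\<close>
datatype ('k, 'l, 'n) cdma_rv = Code 'k 'l nat 'n | Sym 'k nat | Err 'k nat

fun cdma_time :: "('k, 'l, 'n) cdma_rv \<Rightarrow> nat" where
  "cdma_time (Code k l t i) = t"
| "cdma_time (Sym k t) = t"
| "cdma_time (Err k t) = t"

definition cdma_code ::
  "(('k, 'l, 'n::finite) cdma_rv \<Rightarrow> 'a \<Rightarrow> real) \<Rightarrow> 'k \<Rightarrow> 'l \<Rightarrow> nat \<Rightarrow> 'a \<Rightarrow> real ^ 'n" where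
  "cdma_code X k l t \<omega> = (\<chi> i. X (Code k l t i) \<omega>)"

definition cdma_bhat ::
  "(('k, 'l, 'n) cdma_rv \<Rightarrow> 'a \<Rightarrow> real) \<Rightarrow> 'k \<Rightarrow> nat \<Rightarrow> 'a \<Rightarrow> real" where
  "cdma_bhat X k t \<omega> = X (Err k t) \<omega> * X (Sym k t) \<omega>"

text \<open>hat R = hat S^T hat S = sum_{m=1}^M hat B(m) S(m)^T S(m) hat B(m), a KL x KL matrix
  whose rows/columns are indexed by the pairs (k,l).\<close>
definition cdma_Rhat ::
  "(('k::finite, 'l::finite, 'n::finite) cdma_rv \<Rightarrow> 'a \<Rightarrow> real) \<Rightarrow> nat \<Rightarrow> 'a \<Rightarrow> real ^ ('k \<times> 'l) ^ ('k \<times> 'l)" where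
  "cdma_Rhat X M \<omega> = (\<chi> p q. \<Sum>t\<in>{1..M}.
      cdma_bhat X (fst p) t \<omega> * cdma_bhat X (fst q) t \<omega> *
      (cdma_code X (fst p) (snd p) t \<omega> \<bullet> cdma_code X (fst q) (snd q) t \<omega>))"

end

theory Submission
  imports Defs
begin

text \<open>Since every chip is \<open>\<plusminus>1/\<surd>N\<close> and every decision is a sign, each diagonal
  entry of \<open>hat R / M\<close> equals 1. An off-diagonal entry \<open>(p, q)\<close> is the average of \<open>M\<close> independent
  summands bounded by 1; each summand is a sum of products of a chip of code \<open>p\<close> with variables
  independent of it, so it has mean zero because chips are centred, whatever the law of the
  decision errors. Hoeffding's inequality and Borel--Cantelli give the strong law of large
  numbers for such averages, hence \<open>hat R / M \<rightarrow> I\<close> almost surely, and matrix inversion is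
  continuous at \<open>I\<close> by Cramer's rule.\<close>

lemma matrix_inv_right:
  fixes A :: "'a::semiring_1^'n^'m"
  assumes "invertible A"
  shows "A ** matrix_inv A = mat 1"
  using someI_ex[OF assms[unfolded invertible_def]] by (simp add: matrix_inv_def)

lemma matrix_inv_left:
  fixes A :: "'a::semiring_1^'n^'m"
  assumes "invertible A"
  shows "matrix_inv A ** A = mat 1"
  using someI_ex[OF assms[unfolded invertible_def]] by (simp add: matrix_inv_def)

lemma matrix_inv_eqI:
  fixes A B :: "'a::field^'n^'n"
  assumes "A ** B = mat 1"
  shows "matrix_inv A = B"
proof -
  have "invertible A"
    using assms invertible_right_inverse by blast
  have "matrix_inv A = matrix_inv A ** (A ** B)"
    by (simp add: assms)
  also have "\<dots> = B"
    by (simp add: matrix_mul_assoc matrix_inv_left[OF \<open>invertible A\<close>])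
  finally show ?thesis .
qed

lemma matrix_inv_scaleR:
  fixes A :: "real^'n^'n"
  assumes "invertible A" and "c \<noteq> 0"
  shows "matrix_inv (c *\<^sub>R A) = (1 / c) *\<^sub>R matrix_inv A"
  using assms by (intro matrix_inv_eqI) (simp add: matrix_scalar_ac matrix_inv_right)

lemma matrix_inv_cramer:
  fixes A :: "'a::field^'n^'n"
  assumes "det A \<noteq> 0"
  shows "matrix_inv A $ i $ j = det (\<chi> r c. if c = i then axis j 1 $ r else A $ r $ c) / det A"
proof -
  have "A *v (matrix_inv A *v axis j 1) = axis j 1"
    using assms by (simp add: matrix_vector_mul_assoc matrix_inv_right invertible_det_nz)
  then have "matrix_inv A *v axis j 1 =
      (\<chi> k. det (\<chi> r c. if c = k then axis j 1 $ r else A $ r $ c) / det A)"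
    using cramer[OF assms] by blast
  moreover have "(matrix_inv A *v axis j 1) $ i = matrix_inv A $ i $ j"
    by (simp add: matrix_vector_mult_def axis_def if_distrib[where f = "times _"] cong: if_cong)
  ultimately show ?thesis
    by simp
qed

lemma tendsto_det:
  fixes A :: "'b \<Rightarrow> 'a::real_normed_field^'n^'n"
  assumes "(A \<longlongrightarrow> A0) F"
  shows "((\<lambda>x. det (A x)) \<longlongrightarrow> det A0) F"
  unfolding det_def by (intro tendsto_intros assms)

lemma tendsto_matrix_inv:
  fixes A :: "'b \<Rightarrow> 'a::real_normed_field^'n^'n"
  assumes lim: "(A \<longlongrightarrow> A0) F" and "invertible A0"
  shows "\<forall>\<^sub>F x in F. invertible (A x)"
    and "((\<lambda>x. matrix_inv (A x)) \<longlongrightarrow> matrix_inv A0) F"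
proof -
  have det0: "det A0 \<noteq> 0"
    using assms(2) by (simp add: invertible_det_nz)
  have ev: "\<forall>\<^sub>F x in F. det (A x) \<noteq> 0"
    using tendsto_imp_eventually_ne[OF tendsto_det[OF lim] det0] .
  then show "\<forall>\<^sub>F x in F. invertible (A x)"
    by eventually_elim (simp add: invertible_det_nz)
  define G :: "'a^'n^'n \<Rightarrow> 'a^'n^'n" where
    "G B = (\<chi> i j. det (\<chi> r c. if c = i then axis j 1 $ r else B $ r $ c) / det B)" for B
  have G: "matrix_inv B = G B" if "det B \<noteq> 0" for B
    using that by (simp add: G_def vec_eq_iff matrix_inv_cramer)
  have "((\<lambda>x. G (A x)) \<longlongrightarrow> G A0) F"
    unfolding G_def
    by (intro tendsto_vec_lambda tendsto_divide tendsto_det det0 lim)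
       (auto intro!: tendsto_vec_lambda tendsto_vec_nth lim)
  then have "((\<lambda>x. G (A x)) \<longlongrightarrow> matrix_inv A0) F"
    by (simp add: G[OF det0])
  then show "((\<lambda>x. matrix_inv (A x)) \<longlongrightarrow> matrix_inv A0) F"
    by (rule Lim_transform_eventually) (use ev in \<open>auto elim!: eventually_mono simp: G\<close>)
qed

lemma tendsto_scaled_matrix_inv:
  fixes A :: "nat \<Rightarrow> real^'n^'n"
  assumes "(\<lambda>n. (1 / real n) *\<^sub>R A n) \<longlonglongrightarrow> mat 1"
  shows "\<forall>\<^sub>F n in sequentially. invertible (A n)"
    and "(\<lambda>n. real n *\<^sub>R matrix_inv (A n)) \<longlonglongrightarrow> mat 1"
proof -
  define B where "B n = (1 / real n) *\<^sub>R A n" for n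
  have "invertible (mat 1 :: real^'n^'n)"
    unfolding invertible_def by auto
  moreover have "matrix_inv (mat 1 :: real^'n^'n) = mat 1"
    by (rule matrix_inv_eqI) simp
  ultimately have inv: "\<forall>\<^sub>F n in sequentially. invertible (B n)"
    and lim: "(\<lambda>n. matrix_inv (B n)) \<longlonglongrightarrow> mat 1"
    using tendsto_matrix_inv[OF assms[folded B_def]] by simp_all
  have A_eq: "A n = real n *\<^sub>R B n" if "n \<ge> 1" for n
    using that by (simp add: B_def)
  show "\<forall>\<^sub>F n in sequentially. invertible (A n)"
    using inv eventually_ge_at_top[of 1] by eventually_elim (simp add: A_eq scalar_invertible)
  have "\<forall>\<^sub>F n in sequentially. matrix_inv (B n) = real n *\<^sub>R matrix_inv (A n)"
    using inv eventually_ge_at_top[of 1] by eventually_elim (simp add: A_eq matrix_inv_scaleR)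
  then show "(\<lambda>n. real n *\<^sub>R matrix_inv (A n)) \<longlonglongrightarrow> mat 1"
    by (rule Lim_transform_eventually[OF lim])
qed

lemma (in prob_space) prob_abs_sum_ge_le_geometric:
  fixes Z :: "nat \<Rightarrow> 'a \<Rightarrow> real"
  assumes indep: "indep_vars (\<lambda>_. borel) Z {1..}"
    and bounded: "\<And>t. 1 \<le> t \<Longrightarrow> AE \<omega> in M. \<bar>Z t \<omega>\<bar> \<le> B" and "B > 0"
    and mean_zero: "\<And>t. 1 \<le> t \<Longrightarrow> expectation (Z t) = 0"
    and "e > 0"
  shows "prob {\<omega> \<in> space M. real n * e \<le> \<bar>\<Sum>t\<in>{1..n}. Z t \<omega>\<bar>}
           \<le> 2 * exp (- (e\<^sup>2 / (2 * B\<^sup>2))) ^ n"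
proof (cases "n = 0")
  case False
  interpret Hoeffding_ineq M "{1..n}" Z "\<lambda>_. -B" "\<lambda>_. B" 0
  proof unfold_locales
    show "indep_vars (\<lambda>_. borel) Z {1..n}"
      by (rule indep_vars_subset[OF indep]) auto
    show "AE \<omega> in M. Z t \<omega> \<in> {- B..B}" if "t \<in> {1..n}" for t
    proof -
      have "AE \<omega> in M. \<bar>Z t \<omega>\<bar> \<le> B"
        using that by (intro bounded) simp
      then show ?thesis
        by eventually_elim (auto simp: abs_le_iff)
    qed
    show "0 \<equiv> \<Sum>t = 1..n. expectation (Z t)"
      using mean_zero by simp
  qed simp
  have "prob {\<omega> \<in> space M. real n * e \<le> \<bar>(\<Sum>t\<in>{1..n}. Z t \<omega>) - 0\<bar>}
      \<le> 2 * exp (-2 * (real n * e)\<^sup>2 / (\<Sum>t\<in>{1..n}. (B - - B)\<^sup>2))"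
    using False \<open>B > 0\<close> \<open>e > 0\<close> by (intro Hoeffding_ineq_abs_ge) auto
  also have "-2 * (real n * e)\<^sup>2 / (\<Sum>t\<in>{1..n}. (B - - B)\<^sup>2) = real n * (- (e\<^sup>2 / (2 * B\<^sup>2)))"
    using False \<open>B > 0\<close> by (simp add: power2_eq_square field_simps)
  also have "exp (real n * (- (e\<^sup>2 / (2 * B\<^sup>2)))) = exp (- (e\<^sup>2 / (2 * B\<^sup>2))) ^ n"
    by (rule exp_of_nat_mult)
  finally show ?thesis
    by simp
qed (simp add: prob_space)

lemma (in prob_space) AE_eventually_abs_sum_less:
  fixes Z :: "nat \<Rightarrow> 'a \<Rightarrow> real"
  assumes indep: "indep_vars (\<lambda>_. borel) Z {1..}"
    and "\<And>t. 1 \<le> t \<Longrightarrow> AE \<omega> in M. \<bar>Z t \<omega>\<bar> \<le> B" and "B > 0"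
    and "\<And>t. 1 \<le> t \<Longrightarrow> expectation (Z t) = 0"
    and "e > 0"
  shows "AE \<omega> in M. \<forall>\<^sub>F n in sequentially. \<bar>\<Sum>t\<in>{1..n}. Z t \<omega>\<bar> < real n * e"
proof -
  define A where "A n = {\<omega> \<in> space M. real n * e \<le> \<bar>\<Sum>t\<in>{1..n}. Z t \<omega>\<bar>}" for n
  have [measurable]: "A n \<in> sets M" for n
  proof -
    have "(\<lambda>\<omega>. \<Sum>t\<in>{1..n}. Z t \<omega>) \<in> borel_measurable M"
      using indep unfolding indep_vars_def by (intro borel_measurable_sum) auto
    then show ?thesis
      unfolding A_def by measurable
  qed
  define q where "q = exp (- (e\<^sup>2 / (2 * B\<^sup>2)))"
  have q: "0 \<le> q" "q < 1"
    using \<open>e > 0\<close> \<open>B > 0\<close> by (simp_all add: q_def)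
  have tail: "measure M (A n) \<le> 2 * q ^ n" for n
    using prob_abs_sum_ge_le_geometric[OF assms, of n] by (simp add: A_def q_def)
  have "summable (\<lambda>n. measure M (A n))"
    by (rule summable_comparison_test'[where g = "\<lambda>n. 2 * q ^ n" and N = 0])
       (use q tail in \<open>auto intro!: summable_mult summable_geometric\<close>)
  then have "AE \<omega> in M. \<forall>\<^sub>F n in sequentially. \<omega> \<in> space M - A n"
    by (intro borel_cantelli_AE1) (auto simp: emeasure_eq_measure)
  then show ?thesis
    by eventually_elim (auto elim!: eventually_mono simp: A_def not_le)
qed

lemma (in prob_space) AE_average_tendsto_zero:
  fixes Z :: "nat \<Rightarrow> 'a \<Rightarrow> real"
  assumes "indep_vars (\<lambda>_. borel) Z {1..}"
    and "\<And>t. 1 \<le> t \<Longrightarrow> AE \<omega> in M. \<bar>Z t \<omega>\<bar> \<le> B" and "B > 0"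
    and "\<And>t. 1 \<le> t \<Longrightarrow> expectation (Z t) = 0"
  shows "AE \<omega> in M. (\<lambda>n. (\<Sum>t\<in>{1..n}. Z t \<omega>) / real n) \<longlonglongrightarrow> 0"
proof -
  have "AE \<omega> in M. \<forall>m::nat. \<forall>\<^sub>F n in sequentially. \<bar>\<Sum>t\<in>{1..n}. Z t \<omega>\<bar> < real n * (1 / Suc m)"
    unfolding AE_all_countable by (intro allI AE_eventually_abs_sum_less[OF assms]) auto
  then show ?thesis
  proof eventually_elim
    case (elim \<omega>)
    show ?case
    proof (rule tendstoI)
      fix e :: real
      assume "e > 0"
      then obtain m where m: "1 / Suc m < e"
        by (rule nat_approx_posE)
      from elim[rule_format, of m]
      show "\<forall>\<^sub>F n in sequentially. dist ((\<Sum>t\<in>{1..n}. Z t \<omega>) / real n) 0 < e"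
      proof eventually_elim
        case (elim n)
        then have "n > 0"
          by (cases n) auto
        with elim have "\<bar>\<Sum>t\<in>{1..n}. Z t \<omega>\<bar> / real n < 1 / Suc m"
          by (simp add: divide_simps mult.commute)
        with m show ?case
          by (simp add: abs_divide)
      qed
    qed
  qed
qed

lemma (in prob_space) indep_var_component_function:
  assumes indep: "indep_vars (\<lambda>_. borel) X I" and "i \<in> I" "J \<subseteq> I - {i}"
    and "g \<in> borel_measurable (PiM J (\<lambda>_. borel))"
  shows "indep_var borel (X i) borel (\<lambda>\<omega>. g (\<lambda>j\<in>J. X j \<omega>))"
proof -
  have "indep_var borel ((\<lambda>f. f i) \<circ> (\<lambda>\<omega>. \<lambda>j\<in>{i}. X j \<omega>)) borel (g \<circ> (\<lambda>\<omega>. \<lambda>j\<in>J. X j \<omega>))"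
    using assms by (intro indep_var_compose[OF indep_var_restrict[OF indep]]) auto
  then show ?thesis
    by (simp add: comp_def)
qed

lemma (in prob_space) AE_two_valued:
  fixes f :: "'a \<Rightarrow> real"
  assumes [measurable]: "random_variable borel f" and "a \<noteq> b"
    and "prob {\<omega> \<in> space M. f \<omega> = a} + prob {\<omega> \<in> space M. f \<omega> = b} = 1"
  shows "AE \<omega> in M. f \<omega> \<in> {a, b}"
proof -
  have "prob ({\<omega> \<in> space M. f \<omega> = a} \<union> {\<omega> \<in> space M. f \<omega> = b}) = 1"
    using assms by (subst finite_measure_Union) auto
  from AE_prob_1[OF this] show ?thesis
    by eventually_elim auto
qed

lemma (in prob_space) expectation_two_valued:
  fixes f :: "'a \<Rightarrow> real"
  assumes [measurable]: "random_variable borel f" and "a \<noteq> b"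
    and "prob {\<omega> \<in> space M. f \<omega> = a} + prob {\<omega> \<in> space M. f \<omega> = b} = 1"
  shows "expectation f = a * prob {\<omega> \<in> space M. f \<omega> = a} + b * prob {\<omega> \<in> space M. f \<omega> = b}"
proof -
  define A B where "A = {\<omega> \<in> space M. f \<omega> = a}" and "B = {\<omega> \<in> space M. f \<omega> = b}"
  have [measurable]: "A \<in> sets M" "B \<in> sets M"
    unfolding A_def B_def by measurable
  have "AE \<omega> in M. f \<omega> = a * indicator A \<omega> + b * indicator B \<omega>"
    using AE_two_valued[OF assms] AE_space
    by eventually_elim (use \<open>a \<noteq> b\<close> in \<open>auto simp: A_def B_def\<close>)
  then have "expectation f = expectation (\<lambda>\<omega>. a * indicator A \<omega> + b * indicator B \<omega>)"
    by (intro integral_cong_AE) auto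
  also have "\<dots> = a * prob A + b * prob B"
    using sets.sets_into_space[of A] sets.sets_into_space[of B]
    by (subst Bochner_Integration.integral_add)
       (auto intro!: integrable_mult_right integrable_real_indicator simp: Int_absorb2 emeasure_eq_measure)
  finally show ?thesis
    by (simp add: A_def B_def)
qed

lemma (in prob_space) AE_abs_eq_two_point:
  fixes f :: "'a \<Rightarrow> real"
  assumes "random_variable borel f" and "a \<noteq> 0"
    and "prob {\<omega> \<in> space M. f \<omega> = a} + prob {\<omega> \<in> space M. f \<omega> = - a} = 1"
  shows "AE \<omega> in M. \<bar>f \<omega>\<bar> = \<bar>a\<bar>"
proof -
  have "a \<noteq> - a"
    using \<open>a \<noteq> 0\<close> by simp
  from AE_two_valued[OF assms(1) this assms(3)] show ?thesis
    by eventually_elim auto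
qed

instance cdma_rv :: (countable, countable, countable) countable
  by countable_datatype

fun cdma_amplitude :: "('k, 'l, 'n::finite) cdma_rv \<Rightarrow> real" where
  "cdma_amplitude (Code k l t i) = 1 / sqrt (real CARD('n))"
| "cdma_amplitude (Sym k t) = 1"
| "cdma_amplitude (Err k t) = 1"

lemma cdma_amplitude_le_one: "cdma_amplitude (j :: ('k, 'l, 'n::finite) cdma_rv) \<le> 1"
  by (cases j) simp_all

definition cdma_admissible :: "(('k, 'l, 'n::finite) cdma_rv \<Rightarrow> real) \<Rightarrow> bool" where
  "cdma_admissible x \<longleftrightarrow> (\<forall>j. 1 \<le> cdma_time j \<longrightarrow> \<bar>x j\<bar> = cdma_amplitude j)"

definition cdma_term ::
  "(('k, 'l, 'n::finite) cdma_rv \<Rightarrow> real) \<Rightarrow> 'k \<times> 'l \<Rightarrow> 'k \<times> 'l \<Rightarrow> nat \<Rightarrow> real" where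
  "cdma_term x p q t =
     (x (Err (fst p) t) * x (Sym (fst p) t)) * (x (Err (fst q) t) * x (Sym (fst q) t)) *
     (\<Sum>i\<in>UNIV. x (Code (fst p) (snd p) t i) * x (Code (fst q) (snd q) t i))"

lemma cdma_Rhat_entry:
  "cdma_Rhat X M \<omega> $ p $ q = (\<Sum>t\<in>{1..M}. cdma_term (\<lambda>j. X j \<omega>) p q t)"
  by (simp add: cdma_Rhat_def cdma_term_def cdma_bhat_def cdma_code_def inner_vec_def)

lemma cdma_term_abs_le:
  fixes x :: "('k, 'l, 'n::finite) cdma_rv \<Rightarrow> real"
  assumes "cdma_admissible x" and "1 \<le> t"
  shows "\<bar>cdma_term x p q t\<bar> \<le> 1"
proof -
  have "\<bar>\<Sum>i\<in>UNIV. x (Code (fst p) (snd p) t i) * x (Code (fst q) (snd q) t i)\<bar>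
      \<le> (\<Sum>i\<in>(UNIV :: 'n set). \<bar>x (Code (fst p) (snd p) t i) * x (Code (fst q) (snd q) t i)\<bar>)"
    by (rule sum_abs)
  also have "\<dots> = real CARD('n) * (1 / sqrt (real CARD('n)))\<^sup>2"
    using assms by (simp add: cdma_admissible_def abs_mult power2_eq_square)
  also have "\<dots> = 1"
    by (simp add: power_divide)
  finally show ?thesis
    using assms by (simp add: cdma_term_def cdma_admissible_def abs_mult)
qed

lemma cdma_term_diag:
  fixes x :: "('k, 'l, 'n::finite) cdma_rv \<Rightarrow> real"
  assumes "cdma_admissible x" and "1 \<le> t"
  shows "cdma_term x p p t = 1"
proof -
  have sq: "x j * x j = cdma_amplitude j ^ 2" if "1 \<le> cdma_time j" for j
  proof -
    have "\<bar>x j\<bar> = cdma_amplitude j"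
      using assms(1) that by (simp add: cdma_admissible_def)
    then show ?thesis
      by (metis abs_mult_self_eq power2_eq_square)
  qed
  have "cdma_term x p p t =
      (x (Err (fst p) t) * x (Err (fst p) t)) * (x (Sym (fst p) t) * x (Sym (fst p) t)) *
      (\<Sum>i\<in>UNIV. x (Code (fst p) (snd p) t i) * x (Code (fst p) (snd p) t i))"
    by (simp add: cdma_term_def mult_ac)
  also have "\<dots> = real CARD('n) * (1 / sqrt (real CARD('n)))\<^sup>2"
    using \<open>1 \<le> t\<close> by (simp add: sq del: power_divide)
  also have "\<dots> = 1"
    by (simp add: power_divide)
  finally show ?thesis .
qed

locale cdma_model = prob_space +
  fixes X :: "('k::finite, 'l::finite, 'n::finite) cdma_rv \<Rightarrow> 'a \<Rightarrow> real"
  assumes indep: "indep_vars (\<lambda>_. borel) X {j. 1 \<le> cdma_time j}"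
    and abs_eq_amplitude: "\<And>j. 1 \<le> cdma_time j \<Longrightarrow> AE \<omega> in M. \<bar>X j \<omega>\<bar> = cdma_amplitude j"
    and code_mean_zero: "\<And>k l t i. 1 \<le> t \<Longrightarrow> expectation (X (Code k l t i)) = 0"
begin

lemma random_variable_X [measurable]: "1 \<le> cdma_time j \<Longrightarrow> random_variable borel (X j)"
  using indep unfolding indep_vars_def by blast

lemma AE_admissible: "AE \<omega> in M. cdma_admissible (\<lambda>j. X j \<omega>)"
  unfolding cdma_admissible_def AE_all_countable
  using abs_eq_amplitude by (auto elim: eventually_mono)

lemma AE_term_abs_le: "1 \<le> t \<Longrightarrow> AE \<omega> in M. \<bar>cdma_term (\<lambda>j. X j \<omega>) p q t\<bar> \<le> 1"
  using AE_admissible by eventually_elim (rule cdma_term_abs_le)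

lemma indep_terms: "indep_vars (\<lambda>_. borel) (\<lambda>t \<omega>. cdma_term (\<lambda>j. X j \<omega>) p q t) {1..}"
proof -
  define K where "K t = {j :: ('k, 'l, 'n) cdma_rv. cdma_time j = t}" for t
  have "indep_vars (\<lambda>t. PiM (K t) (\<lambda>_. borel)) (\<lambda>t \<omega>. \<lambda>j\<in>K t. X j \<omega>) {1..}"
    by (rule indep_vars_restrict[OF indep]) (auto simp: K_def disjoint_family_on_def)
  moreover have "(\<lambda>f. cdma_term f p q t) \<in> borel_measurable (PiM (K t) (\<lambda>_. borel))" for t
    unfolding cdma_term_def
    by (intro borel_measurable_times borel_measurable_sum measurable_component_singleton)
       (auto simp: K_def)
  ultimately have "indep_vars (\<lambda>_. borel) (\<lambda>t \<omega>. cdma_term (\<lambda>j\<in>K t. X j \<omega>) p q t) {1..}"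
    by (rule indep_vars_compose2)
  then show ?thesis
    by (simp add: cdma_term_def K_def)
qed

lemma term_mean_zero:
  assumes "p \<noteq> q" and "1 \<le> t"
  shows "expectation (\<lambda>\<omega>. cdma_term (\<lambda>j. X j \<omega>) p q t) = 0"
proof -
  obtain k l k' l' where pq: "p = (k, l)" "q = (k', l')"
    by fastforce
  define J where "J i = {Err k t, Sym k t, Err k' t, Sym k' t, Code k' l' t i}" for i :: 'n
  define g where "g i f = f (Err k t) * f (Sym k t) * f (Err k' t) * f (Sym k' t) * f (Code k' l' t i)"
    for i :: 'n and f :: "('k, 'l, 'n) cdma_rv \<Rightarrow> real"
  define R where "R i \<omega> = g i (\<lambda>j. X j \<omega>)" for i \<omega>
  have term_eq: "cdma_term (\<lambda>j. X j \<omega>) p q t = (\<Sum>i\<in>UNIV. X (Code k l t i) \<omega> * R i \<omega>)" for \<omega>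
    by (simp add: cdma_term_def R_def g_def pq sum_distrib_left mult_ac)
  have indep_R: "indep_var borel (X (Code k l t i)) borel (R i)" for i
  proof -
    have "indep_var borel (X (Code k l t i)) borel (\<lambda>\<omega>. g i (\<lambda>j\<in>J i. X j \<omega>))"
      unfolding g_def using assms
      by (intro indep_var_component_function[OF indep] borel_measurable_times
          measurable_component_singleton) (auto simp: J_def pq)
    then show ?thesis
      by (simp add: R_def[abs_def] g_def J_def)
  qed
  have int_code: "integrable M (X (Code k l t i))" for i
  proof (rule integrable_const_bound[where B = 1])
    show "AE \<omega> in M. norm (X (Code k l t i) \<omega>) \<le> 1"
      using abs_eq_amplitude[of "Code k l t i"] \<open>1 \<le> t\<close>
      by (auto simp: cdma_amplitude_le_one elim!: eventually_mono)
  qed (use \<open>1 \<le> t\<close> in simp)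
  have int_R: "integrable M (R i)" for i
  proof (rule integrable_const_bound[where B = 1])
    show "AE \<omega> in M. norm (R i \<omega>) \<le> 1"
      using AE_admissible
    proof eventually_elim
      case (elim \<omega>)
      then have "\<bar>R i \<omega>\<bar> = cdma_amplitude (Code k' l' t i)"
        using \<open>1 \<le> t\<close> by (simp add: cdma_admissible_def R_def g_def abs_mult)
      then show ?case
        by (simp add: cdma_amplitude_le_one)
    qed
    show "random_variable borel (R i)"
      unfolding R_def g_def using \<open>1 \<le> t\<close>
      by (intro borel_measurable_times random_variable_X) auto
  qed
  have "expectation (\<lambda>\<omega>. X (Code k l t i) \<omega> * R i \<omega>) = 0" for i
    using indep_var_lebesgue_integral[OF indep_R int_code int_R] code_mean_zero[OF \<open>1 \<le> t\<close>]
    by simp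
  then show ?thesis
    unfolding term_eq
    by (subst Bochner_Integration.integral_sum)
       (auto intro: indep_var_integrable[OF indep_R int_code int_R])
qed

lemma AE_scaled_Rhat_tendsto: "AE \<omega> in M. (\<lambda>M. (1 / real M) *\<^sub>R cdma_Rhat X M \<omega>) \<longlonglongrightarrow> mat 1"
proof -
  have "AE \<omega> in M. \<forall>p q. p \<noteq> q \<longrightarrow>
          (\<lambda>M. (\<Sum>t\<in>{1..M}. cdma_term (\<lambda>j. X j \<omega>) p q t) / real M) \<longlonglongrightarrow> 0"
    unfolding AE_all_countable
  proof (intro allI)
    fix p q :: "'k \<times> 'l"
    show "AE \<omega> in M. p \<noteq> q \<longrightarrow>
            (\<lambda>M. (\<Sum>t\<in>{1..M}. cdma_term (\<lambda>j. X j \<omega>) p q t) / real M) \<longlonglongrightarrow> 0"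
    proof (cases "p = q")
      case False
      have "AE \<omega> in M. (\<lambda>M. (\<Sum>t\<in>{1..M}. cdma_term (\<lambda>j. X j \<omega>) p q t) / real M) \<longlonglongrightarrow> 0"
        by (rule AE_average_tendsto_zero[OF indep_terms AE_term_abs_le _ term_mean_zero[OF False]])
          simp_all
      then show ?thesis
        by simp
    qed simp
  qed
  with AE_admissible show ?thesis
  proof eventually_elim
    case (elim \<omega>)
    have entry: "((1 / real M) *\<^sub>R cdma_Rhat X M \<omega>) $ p $ q =
        (\<Sum>t\<in>{1..M}. cdma_term (\<lambda>j. X j \<omega>) p q t) / real M" for M p q
      by (simp add: cdma_Rhat_entry)
    have "(\<lambda>M. ((1 / real M) *\<^sub>R cdma_Rhat X M \<omega>) $ p $ q) \<longlonglongrightarrow> mat 1 $ p $ q" for p q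
    proof (cases "p = q")
      case True
      have diag_sum: "(\<Sum>t\<in>{1..M}. cdma_term (\<lambda>j. X j \<omega>) p q t) = real M" for M
        using True by (simp add: cdma_term_diag[OF elim(1)])
      have "\<forall>\<^sub>F M in sequentially. ((1 / real M) *\<^sub>R cdma_Rhat X M \<omega>) $ p $ q = 1"
        using eventually_ge_at_top[of 1]
        by eventually_elim (unfold entry diag_sum, simp)
      then show ?thesis
        using True by (simp add: mat_def tendsto_eventually)
    next
      case False
      with elim(2) have "(\<lambda>M. (\<Sum>t\<in>{1..M}. cdma_term (\<lambda>j. X j \<omega>) p q t) / real M) \<longlonglongrightarrow> 0"
        by blast
      then show ?thesis
        unfolding entry using False by (simp add: mat_def)
    qed
    then show ?case
      by (intro vec_tendstoI) simp
  qed
qed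

theorem AE_Rhat_inverse_tendsto:
  "AE \<omega> in M. (\<forall>\<^sub>F M in sequentially. invertible (cdma_Rhat X M \<omega>)) \<and>
     ((\<lambda>M. real M *\<^sub>R matrix_inv (cdma_Rhat X M \<omega>)) \<longlonglongrightarrow> mat 1)"
  using AE_scaled_Rhat_tendsto by eventually_elim (intro conjI tendsto_scaled_matrix_inv)

end

theorem mainTheorem1:
  fixes P :: "'a measure"
    and X :: "('k::finite, 'l::finite, 'n::finite) cdma_rv \<Rightarrow> 'a \<Rightarrow> real"
    and pe :: "nat \<Rightarrow> real"
  assumes "prob_space P"
    and indep: "prob_space.indep_vars P (\<lambda>_. borel) X {j. 1 \<le> cdma_time j}"
    and code_p: "\<And>k l t i. 1 \<le> t \<Longrightarrow>
        measure P {\<omega> \<in> space P. X (Code k l t i) \<omega> = 1 / sqrt (real CARD('n))} = 1/2"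
    and code_m: "\<And>k l t i. 1 \<le> t \<Longrightarrow>
        measure P {\<omega> \<in> space P. X (Code k l t i) \<omega> = - 1 / sqrt (real CARD('n))} = 1/2"
    and sym_p: "\<And>k t. 1 \<le> t \<Longrightarrow> measure P {\<omega> \<in> space P. X (Sym k t) \<omega> = 1} = 1/2"
    and sym_m: "\<And>k t. 1 \<le> t \<Longrightarrow> measure P {\<omega> \<in> space P. X (Sym k t) \<omega> = -1} = 1/2"
    and pe_range: "\<And>t. 0 \<le> pe t \<and> pe t \<le> 1"
    and err_p: "\<And>k t. 1 \<le> t \<Longrightarrow> measure P {\<omega> \<in> space P. X (Err k t) \<omega> = 1} = 1 - pe t"
    and err_m: "\<And>k t. 1 \<le> t \<Longrightarrow> measure P {\<omega> \<in> space P. X (Err k t) \<omega> = -1} = pe t"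
    and pe_lim: "pe \<longlonglongrightarrow> 0"
  shows "AE \<omega> in P. (\<forall>\<^sub>F M in sequentially. invertible (cdma_Rhat X M \<omega>)) \<and>
           ((\<lambda>M. real M *\<^sub>R matrix_inv (cdma_Rhat X M \<omega>)) \<longlonglongrightarrow> mat 1)"
proof -
  interpret prob_space P by fact
  have rv: "random_variable borel (X j)" if "1 \<le> cdma_time j" for j
    using indep that unfolding indep_vars_def by blast
  interpret cdma_model P X
  proof
    show "indep_vars (\<lambda>_. borel) X {j. 1 \<le> cdma_time j}" by (fact indep)
  next
    fix j :: "('k, 'l, 'n) cdma_rv"
    assume j: "1 \<le> cdma_time j"
    show "AE \<omega> in P. \<bar>X j \<omega>\<bar> = cdma_amplitude j"
    proof (cases j)
      case (Code k l t i)
      then show ?thesis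
        using AE_abs_eq_two_point[OF rv[OF j], of "1 / sqrt (real CARD('n))"]
          code_p[of t k l i] code_m[of t k l i] j by simp
    next
      case (Sym k t)
      then show ?thesis
        using AE_abs_eq_two_point[OF rv[OF j], of 1] sym_p[of t k] sym_m[of t k] j by simp
    next
      case (Err k t)
      then show ?thesis
        using AE_abs_eq_two_point[OF rv[OF j], of 1] err_p[of t k] err_m[of t k] j by simp
    qed
  next
    fix k l i and t :: nat
    assume t: "1 \<le> t"
    let ?c = "1 / sqrt (real CARD('n))"
    have "prob {\<omega> \<in> space P. X (Code k l t i) \<omega> = ?c} = 1/2"
      and "prob {\<omega> \<in> space P. X (Code k l t i) \<omega> = - ?c} = 1/2"
      using code_p[OF t] code_m[OF t] by simp_all
    then show "expectation (X (Code k l t i)) = 0"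
      using expectation_two_valued[OF rv, of "Code k l t i" ?c "- ?c"] t by simp
  qed
  show ?thesis
    by (rule AE_Rhat_inverse_tendsto)
qed

end
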